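(* Let $(\Phi,D)$ and $(\Psi,E)$ be domain-free s-continuous information algebras. Then $([\Phi\rightarrow\Psi]_c,D\times E)$, with pointwise combination $(f\otimes g)(\phi)=f(\phi)\otimes g(\phi)$ and focusing $f^{\Rightarrow(x,y)}(\phi)=(f(\phi^{\Rightarrow x}))^{\Rightarrow y}$, is a domain-free s-continuous information algebra.
   Context: A domain-free information algebra $(\Phi,D)$ consists of a set $\Phi$, a lattice $D$, a combination $\otimes$ and a focusing $(\psi,x)\mapsto\psi^{\Rightarrow x}$ ($x\in D$) such that: $\otimes$ is associative, commutative with neutral element $e$; $(\psi^{\Rightarrow y})^{\Rightarrow x}=\psi^{\Rightarrow x\wedge y}$; $(\phi^{\Rightarrow x}\otimes\psi)^{\Rightarrow x}=\phi^{\Rightarrow x}\otimes\psi^{\Rightarrow x}$; every $\psi$ has some $x$ with $\psi^{\Rightarrow x}=\psi$; $\psi\otimes\psi^{\Rightarrow x}=\psi$. Order: $\psi\le\phi$ iff $\psi\otimes\phi=\phi$; suprema refer to this order. $a\ll b$ means: for every directed $X$ with $b\le\vee X$ there is $c\in X$ with $a\le c$. $(\Phi,D)$, with $D$ having a top element, is continuous (resp. s-continuous) if there exists $\Gamma\subseteq\Phi$, closed under combination and containing $e$, such that every directed subset of $\Gamma$ has a supremum in $\Phi$ and $\phi=\vee\{\psi\in\Gamma:\psi\ll\phi\}$ for all $\phi$ (resp. $\phi^{\Rightarrow x}=\vee\{\psi\in\Gamma:\psi=\psi^{\Rightarrow x}\ll\phi\}$ for all $\phi,x$). $[\Phi\rightarrow\Psi]_c$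 denotes the set of maps $f:\Phi\to\Psi$ with $f(\vee X)=\vee f(X)$ for every directed $X\subseteq\Phi$; $D\times E$ is the product lattice. *)

theory Defs
  imports Main "HOL-Library.Product_Order" "HOL-Library.FuncSet"
begin

definition info_alg ::
  "'a set \<Rightarrow> ('a \<Rightarrow> 'a \<Rightarrow> 'a) \<Rightarrow> 'a \<Rightarrow> ('a \<Rightarrow> 'd::lattice \<Rightarrow> 'a) \<Rightarrow> bool" where
  "info_alg Phi cmb e foc \<longleftrightarrow>
     (\<forall>a\<in>Phi. \<forall>b\<in>Phi. cmb a b \<in> Phi) \<and> e \<in> Phi \<and>
     (\<forall>a\<in>Phi. \<forall>x. foc a x \<in> Phi) \<and>
     (\<forall>a\<in>Phi. \<forall>b\<in>Phi. \<forall>c\<in>Phi. cmb (cmb a b) c = cmb a (cmb b c)) \<and>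
     (\<forall>a\<in>Phi. \<forall>b\<in>Phi. cmb a b = cmb b a) \<and>
     (\<forall>a\<in>Phi. cmb a e = a) \<and>
     (\<forall>a\<in>Phi. \<forall>x y. foc (foc a y) x = foc a (inf x y)) \<and>
     (\<forall>a\<in>Phi. \<forall>b\<in>Phi. \<forall>x. foc (cmb (foc a x) b) x = cmb (foc a x) (foc b x)) \<and>
     (\<forall>a\<in>Phi. \<exists>x. foc a x = a) \<and>
     (\<forall>a\<in>Phi. \<forall>x. cmb a (foc a x) = a)"

definition ia_le :: "('a \<Rightarrow> 'a \<Rightarrow> 'a) \<Rightarrow> 'a \<Rightarrow> 'a \<Rightarrow> bool" where
  "ia_le cmb a b \<longleftrightarrow> cmb a b = b"

definition ia_is_sup :: "'a set \<Rightarrow> ('a \<Rightarrow> 'a \<Rightarrow> 'a) \<Rightarrow> 'a set \<Rightarrow> 'a \<Rightarrow> bool" where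
  "ia_is_sup Phi cmb X s \<longleftrightarrow> s \<in> Phi \<and> (\<forall>a\<in>X. ia_le cmb a s) \<and>
     (\<forall>u\<in>Phi. (\<forall>a\<in>X. ia_le cmb a u) \<longrightarrow> ia_le cmb s u)"

definition ia_directed :: "'a set \<Rightarrow> ('a \<Rightarrow> 'a \<Rightarrow> 'a) \<Rightarrow> 'a set \<Rightarrow> bool" where
  "ia_directed Phi cmb X \<longleftrightarrow> X \<subseteq> Phi \<and> X \<noteq> {} \<and>
     (\<forall>a\<in>X. \<forall>b\<in>X. \<exists>c\<in>X. ia_le cmb a c \<and> ia_le cmb b c)"

definition ia_way_below :: "'a set \<Rightarrow> ('a \<Rightarrow> 'a \<Rightarrow> 'a) \<Rightarrow> 'a \<Rightarrow> 'a \<Rightarrow> bool" where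
  "ia_way_below Phi cmb a b \<longleftrightarrow>
     (\<forall>X s. ia_directed Phi cmb X \<longrightarrow> ia_is_sup Phi cmb X s \<longrightarrow> ia_le cmb b s \<longrightarrow>
        (\<exists>c\<in>X. ia_le cmb a c))"

definition s_continuous ::
  "'a set \<Rightarrow> ('a \<Rightarrow> 'a \<Rightarrow> 'a) \<Rightarrow> 'a \<Rightarrow> ('a \<Rightarrow> 'd::lattice \<Rightarrow> 'a) \<Rightarrow> bool" where
  "s_continuous Phi cmb e foc \<longleftrightarrow>
     (\<exists>t::'d. \<forall>x. x \<le> t) \<and>
     (\<exists>Gamma. Gamma \<subseteq> Phi \<and> e \<in> Gamma \<and>
        (\<forall>a\<in>Gamma. \<forall>b\<in>Gamma. cmb a b \<in> Gamma) \<and>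
        (\<forall>X. X \<subseteq> Gamma \<longrightarrow> ia_directed Phi cmb X \<longrightarrow> (\<exists>s. ia_is_sup Phi cmb X s)) \<and>
        (\<forall>phi\<in>Phi. \<forall>x.
           ia_is_sup Phi cmb {psi \<in> Gamma. foc psi x = psi \<and> ia_way_below Phi cmb psi phi}
             (foc phi x)))"

definition cont_maps ::
  "'a set \<Rightarrow> ('a \<Rightarrow> 'a \<Rightarrow> 'a) \<Rightarrow> 'b set \<Rightarrow> ('b \<Rightarrow> 'b \<Rightarrow> 'b) \<Rightarrow> ('a \<Rightarrow> 'b) set" where
  "cont_maps Phi cP Psi cQ =
     {f \<in> extensional Phi. f ` Phi \<subseteq> Psi \<and>
        (\<forall>X s. ia_directed Phi cP X \<longrightarrow> ia_is_sup Phi cP X s \<longrightarrow>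
           ia_is_sup Psi cQ (f ` X) (f s))}"

definition fun_comb :: "'a set \<Rightarrow> ('b \<Rightarrow> 'b \<Rightarrow> 'b) \<Rightarrow> ('a \<Rightarrow> 'b) \<Rightarrow> ('a \<Rightarrow> 'b) \<Rightarrow> ('a \<Rightarrow> 'b)" where
  "fun_comb Phi cQ f g = (\<lambda>phi\<in>Phi. cQ (f phi) (g phi))"

definition fun_unit :: "'a set \<Rightarrow> 'b \<Rightarrow> ('a \<Rightarrow> 'b)" where
  "fun_unit Phi eQ = (\<lambda>phi\<in>Phi. eQ)"

definition fun_focus ::
  "'a set \<Rightarrow> ('a \<Rightarrow> 'd \<Rightarrow> 'a) \<Rightarrow> ('b \<Rightarrow> 'e \<Rightarrow> 'b) \<Rightarrow> ('a \<Rightarrow> 'b) \<Rightarrow> 'd \<times> 'e \<Rightarrow> ('a \<Rightarrow> 'b)" where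
  "fun_focus Phi fP fQ f xy = (\<lambda>phi\<in>Phi. fQ (f (fP phi (fst xy))) (snd xy))"

end

theory Submission
  imports Defs
begin

text \<open>An s-continuous information algebra with a top domain is a dcpo in which every element
  is the supremum of the basis elements way below it. Continuous maps are ordered pointwise,
  directed suprema of them are computed pointwise, and the algebra laws hold pointwise.
  For s-continuity the whole function space can serve as basis, so only the approximation
  property needs work: the focus of f to (x, y) is the supremum of the step functions that
  send p to b when a is way below the x-focus of p, and to the neutral element otherwise.
  Here b is a y-focused basis element and a an x-focused basis element with b way below f a;
  such a step function is fixed by the focusing and, directed suprema being pointwise, way
  below f. By interpolation and continuity of f, every y-focused basis element way below
  f at the x-focus of p is the value at p of one of these step functions.\<close>

lemma ia_directed_image:
  assumes "ia_directed Phi cP X" and "g ` X \<subseteq> Psi"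
    and "\<And>a b. a \<in> X \<Longrightarrow> b \<in> X \<Longrightarrow> ia_le cP a b \<Longrightarrow> ia_le cQ (g a) (g b)"
  shows "ia_directed Psi cQ (g ` X)"
  unfolding ia_directed_def
proof (intro conjI ballI)
  show "g ` X \<subseteq> Psi" and "g ` X \<noteq> {}"
    using assms(1,2) unfolding ia_directed_def by auto
next
  fix u v assume "u \<in> g ` X" "v \<in> g ` X"
  then obtain a b where "a \<in> X" "b \<in> X" "u = g a" "v = g b" by blast
  moreover obtain c where "c \<in> X" "ia_le cP a c" "ia_le cP b c"
    using assms(1) calculation unfolding ia_directed_def by blast
  ultimately show "\<exists>w\<in>g ` X. ia_le cQ u w \<and> ia_le cQ v w"
    using assms(3) by blast
qed

locale info_algebra =
  fixes Phi :: "'a set" and cmb :: "'a \<Rightarrow> 'a \<Rightarrow> 'a" and e :: 'a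
    and foc :: "'a \<Rightarrow> 'd::lattice \<Rightarrow> 'a"
  assumes info_alg: "info_alg Phi cmb e foc"
begin

abbreviation le where "le \<equiv> ia_le cmb"
abbreviation is_sup where "is_sup \<equiv> ia_is_sup Phi cmb"
abbreviation directed where "directed \<equiv> ia_directed Phi cmb"
abbreviation way_below where "way_below \<equiv> ia_way_below Phi cmb"

lemma cmb_closed: "a \<in> Phi \<Longrightarrow> b \<in> Phi \<Longrightarrow> cmb a b \<in> Phi"
  using info_alg unfolding info_alg_def by blast

lemma e_closed: "e \<in> Phi"
  using info_alg unfolding info_alg_def by blast

lemma foc_closed: "a \<in> Phi \<Longrightarrow> foc a x \<in> Phi"
  using info_alg unfolding info_alg_def by blast

lemma cmb_assoc: "a \<in> Phi \<Longrightarrow> b \<in> Phi \<Longrightarrow> c \<in> Phi \<Longrightarrow> cmb (cmb a b) c = cmb a (cmb b c)"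
  using info_alg unfolding info_alg_def by blast

lemma cmb_commute: "a \<in> Phi \<Longrightarrow> b \<in> Phi \<Longrightarrow> cmb a b = cmb b a"
  using info_alg unfolding info_alg_def by blast

lemma cmb_e: "a \<in> Phi \<Longrightarrow> cmb a e = a"
  using info_alg unfolding info_alg_def by blast

lemma foc_foc: "a \<in> Phi \<Longrightarrow> foc (foc a y) x = foc a (inf x y)"
  using info_alg unfolding info_alg_def by blast

lemma foc_cmb_foc: "a \<in> Phi \<Longrightarrow> b \<in> Phi \<Longrightarrow> foc (cmb (foc a x) b) x = cmb (foc a x) (foc b x)"
  using info_alg unfolding info_alg_def by blast

lemma foc_support: "a \<in> Phi \<Longrightarrow> \<exists>x. foc a x = a"
  using info_alg unfolding info_alg_def by blast

lemma cmb_foc_absorb: "a \<in> Phi \<Longrightarrow> cmb a (foc a x) = a"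
  using info_alg unfolding info_alg_def by blast

lemma e_cmb: "a \<in> Phi \<Longrightarrow> cmb e a = a"
  using cmb_e cmb_commute e_closed by metis

lemma cmb_idem: "a \<in> Phi \<Longrightarrow> cmb a a = a"
  using foc_support cmb_foc_absorb by metis

lemma foc_idem: "a \<in> Phi \<Longrightarrow> foc (foc a x) x = foc a x"
  by (simp add: foc_foc)

lemma foc_e: "foc e x = e"
  using cmb_foc_absorb[OF e_closed] e_cmb foc_closed e_closed by metis

lemma foc_cmb_fixed: "a \<in> Phi \<Longrightarrow> b \<in> Phi \<Longrightarrow> foc a x = a \<Longrightarrow> foc b x = b \<Longrightarrow> foc (cmb a b) x = cmb a b"
  using foc_cmb_foc by metis

lemma le_refl: "a \<in> Phi \<Longrightarrow> le a a"
  by (simp add: ia_le_def cmb_idem)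

lemma le_trans: "a \<in> Phi \<Longrightarrow> b \<in> Phi \<Longrightarrow> c \<in> Phi \<Longrightarrow> le a b \<Longrightarrow> le b c \<Longrightarrow> le a c"
  unfolding ia_le_def by (metis cmb_assoc)

lemma le_antisym: "a \<in> Phi \<Longrightarrow> b \<in> Phi \<Longrightarrow> le a b \<Longrightarrow> le b a \<Longrightarrow> a = b"
  unfolding ia_le_def by (metis cmb_commute)

lemma e_le: "a \<in> Phi \<Longrightarrow> le e a"
  by (simp add: ia_le_def e_cmb)

lemma le_cmb_left: "a \<in> Phi \<Longrightarrow> b \<in> Phi \<Longrightarrow> le a (cmb a b)"
  unfolding ia_le_def by (metis cmb_assoc cmb_idem)

lemma le_cmb_right: "a \<in> Phi \<Longrightarrow> b \<in> Phi \<Longrightarrow> le b (cmb a b)"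
  using le_cmb_left cmb_commute by metis

lemma cmb_le: "a \<in> Phi \<Longrightarrow> b \<in> Phi \<Longrightarrow> c \<in> Phi \<Longrightarrow> le a c \<Longrightarrow> le b c \<Longrightarrow> le (cmb a b) c"
  unfolding ia_le_def by (metis cmb_assoc)

lemma cmb_absorb_le: "a \<in> Phi \<Longrightarrow> b \<in> Phi \<Longrightarrow> le b a \<Longrightarrow> cmb a b = a"
  unfolding ia_le_def by (metis cmb_commute)

lemma cmb_mono:
  assumes "a \<in> Phi" "a' \<in> Phi" "b \<in> Phi" "b' \<in> Phi" "le a a'" "le b b'"
  shows "le (cmb a b) (cmb a' b')"
proof (rule cmb_le)
  show "le a (cmb a' b')"
    using assms le_trans[OF _ _ _ _ le_cmb_left] cmb_closed by blast
  show "le b (cmb a' b')"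
    using assms le_trans[OF _ _ _ _ le_cmb_right] cmb_closed by blast
qed (use assms cmb_closed in auto)

lemma foc_le: "a \<in> Phi \<Longrightarrow> le (foc a x) a"
  unfolding ia_le_def by (metis cmb_commute cmb_foc_absorb foc_closed)

lemma foc_mono:
  assumes "a \<in> Phi" "b \<in> Phi" "le a b"
  shows "le (foc a x) (foc b x)"
proof -
  have "cmb (foc a x) b = b"
    using assms unfolding ia_le_def by (metis cmb_assoc cmb_commute cmb_foc_absorb foc_closed)
  then have "foc b x = cmb (foc a x) (foc b x)"
    using foc_cmb_foc[of a b x] assms by metis
  then show ?thesis
    using assms unfolding ia_le_def by metis
qed

lemma is_sup_closed: "is_sup X s \<Longrightarrow> s \<in> Phi"
  unfolding ia_is_sup_def by blast

lemma is_sup_upper: "is_sup X s \<Longrightarrow> a \<in> X \<Longrightarrow> le a s"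
  unfolding ia_is_sup_def by blast

lemma is_sup_least: "is_sup X s \<Longrightarrow> u \<in> Phi \<Longrightarrow> (\<And>a. a \<in> X \<Longrightarrow> le a u) \<Longrightarrow> le s u"
  unfolding ia_is_sup_def by blast

lemma is_sup_unique: "is_sup X s \<Longrightarrow> is_sup X t \<Longrightarrow> s = t"
  unfolding ia_is_sup_def using le_antisym by blast

lemma is_sup_greatest_element: "m \<in> X \<Longrightarrow> m \<in> Phi \<Longrightarrow> (\<And>a. a \<in> X \<Longrightarrow> le a m) \<Longrightarrow> is_sup X m"
  unfolding ia_is_sup_def by blast

lemma is_sup_singleton: "a \<in> Phi \<Longrightarrow> is_sup {a} a"
  by (rule is_sup_greatest_element) (auto simp: le_refl)

lemma directed_subset: "directed X \<Longrightarrow> X \<subseteq> Phi"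
  unfolding ia_directed_def by blast

lemma directed_nonempty: "directed X \<Longrightarrow> X \<noteq> {}"
  unfolding ia_directed_def by blast

lemma directed_le_pair: "a \<in> Phi \<Longrightarrow> b \<in> Phi \<Longrightarrow> le a b \<Longrightarrow> directed {a, b}"
  unfolding ia_directed_def using le_refl by auto

lemma is_sup_le_pair: "a \<in> Phi \<Longrightarrow> b \<in> Phi \<Longrightarrow> le a b \<Longrightarrow> is_sup {a, b} b"
  by (rule is_sup_greatest_element) (auto simp: le_refl)

lemma way_below_le: "way_below a b \<Longrightarrow> b \<in> Phi \<Longrightarrow> le a b"
  using directed_le_pair[of b b] is_sup_singleton[of b] le_refl[of b]
  unfolding ia_way_below_def by fastforce

lemma way_below_mono:
  assumes "a' \<in> Phi" "a \<in> Phi" "b \<in> Phi" "b' \<in> Phi"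
    and "le a' a" "way_below a b" "le b b'"
  shows "way_below a' b'"
  unfolding ia_way_below_def
proof (intro allI impI)
  fix X s assume X: "directed X" "is_sup X s" "le b' s"
  then have "le b s"
    using assms le_trans is_sup_closed by blast
  then obtain c where "c \<in> X" "le a c"
    using assms X unfolding ia_way_below_def by blast
  then show "\<exists>c\<in>X. le a' c"
    using assms le_trans directed_subset X by blast
qed

lemma e_way_below: "way_below e b"
  unfolding ia_way_below_def ia_directed_def by (meson e_closed e_le subsetD equals0I)

lemma way_below_cmb:
  assumes "a \<in> Phi" "b \<in> Phi" "way_below a c" "way_below b c"
  shows "way_below (cmb a b) c"
  unfolding ia_way_below_def
proof (intro allI impI)
  fix X s assume X: "directed X" "is_sup X s" "le c s"
  obtain c1 where c1: "c1 \<in> X" "le a c1"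
    using assms X unfolding ia_way_below_def by blast
  obtain c2 where c2: "c2 \<in> X" "le b c2"
    using assms X unfolding ia_way_below_def by blast
  obtain c3 where c3: "c3 \<in> X" "le c1 c3" "le c2 c3"
    using X c1 c2 unfolding ia_directed_def by blast
  have "le (cmb a b) c3"
    using c1 c2 c3 assms directed_subset[OF X(1)] le_trans cmb_le by (meson subsetD)
  then show "\<exists>c\<in>X. le (cmb a b) c"
    using c3 by blast
qed

end

locale s_cont_info_algebra = info_algebra Phi cmb e foc
  for Phi :: "'a set" and cmb and e and foc :: "'a \<Rightarrow> 'd::lattice \<Rightarrow> 'a" +
  assumes s_cont: "s_continuous Phi cmb e foc"
begin

definition dom_top :: 'd where
  "dom_top = (SOME t. \<forall>x. x \<le> t)"

lemma le_dom_top: "x \<le> dom_top"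
  using someI_ex[of "\<lambda>t::'d. \<forall>x. x \<le> t"] s_cont unfolding s_continuous_def dom_top_def by blast

definition basis :: "'a set" where
  "basis = (SOME Gamma. Gamma \<subseteq> Phi \<and> e \<in> Gamma \<and>
     (\<forall>a\<in>Gamma. \<forall>b\<in>Gamma. cmb a b \<in> Gamma) \<and>
     (\<forall>X. X \<subseteq> Gamma \<longrightarrow> directed X \<longrightarrow> (\<exists>s. is_sup X s)) \<and>
     (\<forall>phi\<in>Phi. \<forall>x. is_sup {psi \<in> Gamma. foc psi x = psi \<and> way_below psi phi} (foc phi x)))"

lemma basis_props:
  "basis \<subseteq> Phi \<and> e \<in> basis \<and> (\<forall>a\<in>basis. \<forall>b\<in>basis. cmb a b \<in> basis) \<and>
   (\<forall>X. X \<subseteq> basis \<longrightarrow> directed X \<longrightarrow> (\<exists>s. is_sup X s)) \<and>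
   (\<forall>phi\<in>Phi. \<forall>x. is_sup {psi \<in> basis. foc psi x = psi \<and> way_below psi phi} (foc phi x))"
  unfolding basis_def by (rule someI_ex) (use s_cont in \<open>unfold s_continuous_def, blast\<close>)

lemma basis_subset: "basis \<subseteq> Phi"
  using basis_props by blast

lemma e_in_basis: "e \<in> basis"
  using basis_props by blast

lemma basis_cmb_closed: "a \<in> basis \<Longrightarrow> b \<in> basis \<Longrightarrow> cmb a b \<in> basis"
  using basis_props by blast

lemma basis_directed_has_sup: "X \<subseteq> basis \<Longrightarrow> directed X \<Longrightarrow> \<exists>s. is_sup X s"
  using basis_props by blast

lemma foc_is_sup_basis:
  "phi \<in> Phi \<Longrightarrow> is_sup {psi \<in> basis. foc psi x = psi \<and> way_below psi phi} (foc phi x)"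
  using basis_props by blast

lemma foc_dom_top:
  assumes a: "a \<in> Phi"
  shows "foc a dom_top = a"
proof -
  obtain x where x: "foc a x = a"
    using foc_support a by blast
  have "foc a dom_top = foc (foc a x) dom_top"
    using x by simp
  also have "\<dots> = foc a x"
    using a foc_foc le_dom_top by (simp add: inf_absorb2)
  finally show ?thesis
    using x by simp
qed

lemma is_sup_basis:
  assumes c: "c \<in> Phi"
  shows "is_sup {psi \<in> basis. way_below psi c} c"
proof -
  have "{psi \<in> basis. foc psi dom_top = psi \<and> way_below psi c} = {psi \<in> basis. way_below psi c}"
    using foc_dom_top basis_subset by blast
  then show ?thesis
    using foc_is_sup_basis[OF c, of dom_top] foc_dom_top[OF c] by simp
qed

lemma focused_basis_directed:
  "directed {a \<in> basis. foc a x = a \<and> way_below a z}"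
  unfolding ia_directed_def
proof (intro conjI ballI)
  show "{a \<in> basis. foc a x = a \<and> way_below a z} \<subseteq> Phi"
    using basis_subset by auto
  show "{a \<in> basis. foc a x = a \<and> way_below a z} \<noteq> {}"
    using e_in_basis e_way_below foc_e by blast
next
  fix a b assume a: "a \<in> {a \<in> basis. foc a x = a \<and> way_below a z}"
    and b: "b \<in> {a \<in> basis. foc a x = a \<and> way_below a z}"
  then have "a \<in> Phi" "b \<in> Phi"
    using basis_subset by auto
  moreover have "cmb a b \<in> {a \<in> basis. foc a x = a \<and> way_below a z}"
    using a b calculation basis_cmb_closed foc_cmb_fixed way_below_cmb by auto
  ultimately show "\<exists>c\<in>{a \<in> basis. foc a x = a \<and> way_below a z}. le a c \<and> le b c"
    using le_cmb_left le_cmb_right by blast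
qed

lemma foc_is_sup_focused_basis:
  "phi \<in> Phi \<Longrightarrow> is_sup {a \<in> basis. foc a x = a \<and> way_below a (foc phi x)} (foc phi x)"
  using foc_is_sup_basis[of "foc phi x" x] foc_closed foc_idem by simp

text \<open>Every element being the supremum of the basis elements way below it, a directed set
  has the same upper bounds as the basis elements way below its members; these form a
  directed subset of the basis.\<close>

lemma directed_has_sup:
  assumes X: "directed X"
  shows "\<exists>s. is_sup X s"
proof -
  define B where "B = {psi \<in> basis. \<exists>c\<in>X. way_below psi c}"
  have XP: "X \<subseteq> Phi"
    using X directed_subset by auto
  have "directed B"
    unfolding ia_directed_def
  proof (intro conjI ballI)
    show "B \<subseteq> Phi" using basis_subset B_def by auto
    show "B \<noteq> {}" using X e_in_basis e_way_below unfolding B_def ia_directed_def by blast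
  next
    fix a b assume "a \<in> B" "b \<in> B"
    then obtain c1 c2 where ab: "a \<in> basis" "b \<in> basis" "c1 \<in> X" "c2 \<in> X"
      "way_below a c1" "way_below b c2"
      unfolding B_def by blast
    obtain c3 where c3: "c3 \<in> X" "le c1 c3" "le c2 c3"
      using X ab unfolding ia_directed_def by blast
    have P: "c1 \<in> Phi" "c2 \<in> Phi" "c3 \<in> Phi" "a \<in> Phi" "b \<in> Phi"
      using XP basis_subset ab c3 by auto
    then have "way_below a c3" "way_below b c3"
      using way_below_mono[of a a c1 c3] way_below_mono[of b b c2 c3] ab c3 le_refl by auto
    then have "cmb a b \<in> B"
      using c3 ab P basis_cmb_closed way_below_cmb unfolding B_def by blast
    then show "\<exists>c\<in>B. le a c \<and> le b c"
      using le_cmb_left le_cmb_right P by blast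
  qed
  moreover have "B \<subseteq> basis"
    unfolding B_def by auto
  ultimately obtain s where s: "is_sup B s"
    using basis_directed_has_sup by blast
  have "is_sup X s"
    unfolding ia_is_sup_def
  proof (intro conjI ballI impI)
    show "s \<in> Phi" using s is_sup_closed by auto
  next
    fix c assume c: "c \<in> X"
    show "le c s"
    proof (rule is_sup_least[OF is_sup_basis is_sup_closed[OF s]])
      show "c \<in> Phi" using c XP by auto
      fix a assume "a \<in> {psi \<in> basis. way_below psi c}"
      then have "a \<in> B" using c unfolding B_def by blast
      then show "le a s" by (rule is_sup_upper[OF s])
    qed
  next
    fix u assume u: "u \<in> Phi" "\<forall>a\<in>X. le a u"
    show "le s u"
    proof (rule is_sup_least[OF s u(1)])
      fix a assume "a \<in> B"
      then obtain c where "c \<in> X" "way_below a c" "a \<in> basis"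
        unfolding B_def by blast
      then show "le a u"
        using XP basis_subset way_below_le[of a c] le_trans[of a c u] u by auto
    qed
  qed
  then show ?thesis by blast
qed

lemma way_below_interpolate:
  assumes "b \<in> Phi" "z \<in> Phi" "way_below b z"
  shows "\<exists>b'\<in>basis. way_below b b' \<and> way_below b' z"
proof -
  define C where "C = {p \<in> basis. \<exists>q\<in>basis. way_below p q \<and> way_below q z}"
  have "directed C"
    unfolding ia_directed_def
  proof (intro conjI ballI)
    show "C \<subseteq> Phi" using basis_subset C_def by auto
    show "C \<noteq> {}" using e_in_basis e_way_below unfolding C_def by blast
  next
    fix a b assume "a \<in> C" "b \<in> C"
    then obtain q1 q2 where q: "a \<in> basis" "b \<in> basis" "q1 \<in> basis" "q2 \<in> basis"
      "way_below a q1" "way_below b q2" "way_below q1 z" "way_below q2 z"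
      unfolding C_def by blast
    have P: "a \<in> Phi" "b \<in> Phi" "q1 \<in> Phi" "q2 \<in> Phi"
      using q basis_subset by auto
    have q12: "cmb q1 q2 \<in> Phi"
      using cmb_closed P by blast
    have "way_below a (cmb q1 q2)"
      using way_below_mono[OF P(1,1,3) q12 le_refl[OF P(1)] q(5) le_cmb_left[OF P(3,4)]] .
    moreover have "way_below b (cmb q1 q2)"
      using way_below_mono[OF P(2,2,4) q12 le_refl[OF P(2)] q(6) le_cmb_right[OF P(3,4)]] .
    ultimately have "way_below (cmb a b) (cmb q1 q2)"
      using way_below_cmb P by blast
    moreover have "way_below (cmb q1 q2) z"
      using way_below_cmb P q by blast
    ultimately have "cmb a b \<in> C"
      using basis_cmb_closed q unfolding C_def by blast
    then show "\<exists>c\<in>C. le a c \<and> le b c"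
      using le_cmb_left le_cmb_right P by blast
  qed
  moreover have "C \<subseteq> basis"
    unfolding C_def by auto
  ultimately obtain s where s: "is_sup C s"
    using basis_directed_has_sup by blast
  have "le z s"
  proof (rule is_sup_least[OF is_sup_basis[OF assms(2)] is_sup_closed[OF s]])
    fix q assume q: "q \<in> {psi \<in> basis. way_below psi z}"
    then have "q \<in> Phi"
      using basis_subset by auto
    show "le q s"
    proof (rule is_sup_least[OF is_sup_basis[OF \<open>q \<in> Phi\<close>] is_sup_closed[OF s]])
      fix p assume "p \<in> {psi \<in> basis. way_below psi q}"
      then have "p \<in> C" using q unfolding C_def by blast
      then show "le p s" by (rule is_sup_upper[OF s])
    qed
  qed
  then obtain c where c: "c \<in> C" "le b c"
    using assms \<open>directed C\<close> s unfolding ia_way_below_def by blast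
  then obtain q where q: "q \<in> basis" "way_below c q" "way_below q z" "c \<in> basis"
    unfolding C_def by blast
  have "q \<in> Phi" "c \<in> Phi"
    using q basis_subset by auto
  then have "way_below b q"
    using way_below_mono[OF assms(1)] c(2) q(2) le_refl by blast
  then show ?thesis
    using q by blast
qed

lemma foc_directed_image:
  assumes X: "directed X"
  shows "directed ((\<lambda>c. foc c x) ` X)"
proof (rule ia_directed_image[OF X])
  show "(\<lambda>c. foc c x) ` X \<subseteq> Phi"
    using directed_subset[OF X] foc_closed by auto
  show "le (foc a x) (foc b x)" if "a \<in> X" "b \<in> X" "le a b" for a b
    using that directed_subset[OF X] foc_mono by blast
qed

lemma foc_is_sup_image:
  assumes X: "directed X" and s: "is_sup X s"
  shows "is_sup ((\<lambda>c. foc c x) ` X) (foc s x)"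
  unfolding ia_is_sup_def
proof (intro conjI ballI impI)
  have XP: "X \<subseteq> Phi" and sP: "s \<in> Phi"
    using X s directed_subset is_sup_closed by auto
  show "foc s x \<in> Phi"
    using foc_closed sP by auto
  show "le a (foc s x)" if "a \<in> (\<lambda>c. foc c x) ` X" for a
    using that foc_mono is_sup_upper[OF s] XP sP by blast
  fix u assume u: "u \<in> Phi" "\<forall>a\<in>(\<lambda>c. foc c x) ` X. le a u"
  show "le (foc s x) u"
  proof (rule is_sup_least[OF foc_is_sup_basis[OF sP] u(1)])
    fix p assume p: "p \<in> {psi \<in> basis. foc psi x = psi \<and> way_below psi s}"
    then have "p \<in> Phi"
      using basis_subset by auto
    obtain c where c: "c \<in> X" "le p c"
      using p X s le_refl sP unfolding ia_way_below_def by blast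
    then have "le (foc p x) (foc c x)"
      using foc_mono XP \<open>p \<in> Phi\<close> by blast
    then show "le p u"
      using p u c XP foc_closed \<open>p \<in> Phi\<close> le_trans[of p "foc c x" u] by auto
  qed
qed

end

locale cont_function_space = P: s_cont_info_algebra Phi cP eP fP + Q: s_cont_info_algebra Psi cQ eQ fQ
  for Phi :: "'a set" and cP and eP and fP :: "'a \<Rightarrow> 'd::lattice \<Rightarrow> 'a"
    and Psi :: "'b set" and cQ and eQ and fQ :: "'b \<Rightarrow> 'e::lattice \<Rightarrow> 'b"
begin

abbreviation Fn where "Fn \<equiv> cont_maps Phi cP Psi cQ"
abbreviation fcmb where "fcmb \<equiv> fun_comb Phi cQ"
abbreviation funit where "funit \<equiv> fun_unit Phi eQ"
abbreviation ffoc where "ffoc \<equiv> fun_focus Phi fP fQ"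

lemma cont_maps_extensional: "f \<in> Fn \<Longrightarrow> f \<in> extensional Phi"
  unfolding cont_maps_def by blast

lemma cont_maps_closed: "f \<in> Fn \<Longrightarrow> a \<in> Phi \<Longrightarrow> f a \<in> Psi"
  unfolding cont_maps_def by blast

lemma cont_maps_is_sup_image: "f \<in> Fn \<Longrightarrow> P.directed X \<Longrightarrow> P.is_sup X s \<Longrightarrow> Q.is_sup (f ` X) (f s)"
  unfolding cont_maps_def by blast

lemma cont_mapsI:
  "f \<in> extensional Phi \<Longrightarrow> (\<And>a. a \<in> Phi \<Longrightarrow> f a \<in> Psi) \<Longrightarrow>
   (\<And>X s. P.directed X \<Longrightarrow> P.is_sup X s \<Longrightarrow> Q.is_sup (f ` X) (f s)) \<Longrightarrow> f \<in> Fn"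
  unfolding cont_maps_def by blast

lemma cont_maps_mono:
  assumes "f \<in> Fn" "a \<in> Phi" "b \<in> Phi" "P.le a b"
  shows "Q.le (f a) (f b)"
proof -
  have "Q.is_sup (f ` {a, b}) (f b)"
    by (rule cont_maps_is_sup_image[OF assms(1) P.directed_le_pair[OF assms(2-4)]
          P.is_sup_le_pair[OF assms(2-4)]])
  then show ?thesis
    by (rule Q.is_sup_upper) simp
qed

lemma cont_maps_directed_image:
  assumes f: "f \<in> Fn" and X: "P.directed X"
  shows "Q.directed (f ` X)"
proof (rule ia_directed_image[OF X])
  show "f ` X \<subseteq> Psi"
    using P.directed_subset[OF X] cont_maps_closed[OF f] by auto
  show "Q.le (f a) (f b)" if "a \<in> X" "b \<in> X" "P.le a b" for a b
    using that P.directed_subset[OF X] cont_maps_mono[OF f] by blast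
qed

lemma fcmb_apply: "a \<in> Phi \<Longrightarrow> fcmb f g a = cQ (f a) (g a)"
  unfolding fun_comb_def by simp

lemma funit_apply: "a \<in> Phi \<Longrightarrow> funit a = eQ"
  unfolding fun_unit_def by simp

lemma ffoc_apply: "a \<in> Phi \<Longrightarrow> ffoc f xy a = fQ (f (fP a (fst xy))) (snd xy)"
  unfolding fun_focus_def by simp

lemma fcmb_extensional: "fcmb f g \<in> extensional Phi"
  unfolding fun_comb_def by simp

lemma ffoc_extensional: "ffoc f xy \<in> extensional Phi"
  unfolding fun_focus_def by simp

lemma fun_le_iff:
  assumes "f \<in> Fn" "g \<in> Fn"
  shows "ia_le fcmb f g \<longleftrightarrow> (\<forall>a\<in>Phi. Q.le (f a) (g a))"
proof
  assume "ia_le fcmb f g"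
  then show "\<forall>a\<in>Phi. Q.le (f a) (g a)"
    unfolding ia_le_def fun_comb_def by (metis restrict_apply')
next
  assume "\<forall>a\<in>Phi. Q.le (f a) (g a)"
  then have "fcmb f g = restrict g Phi"
    unfolding fun_comb_def ia_le_def by (intro restrict_ext) auto
  then show "ia_le fcmb f g"
    using extensional_restrict cont_maps_extensional assms unfolding ia_le_def by metis
qed

lemma fcmb_closed:
  assumes f: "f \<in> Fn" and g: "g \<in> Fn"
  shows "fcmb f g \<in> Fn"
proof (rule cont_mapsI)
  show "fcmb f g \<in> extensional Phi"
    by (rule fcmb_extensional)
  show "fcmb f g a \<in> Psi" if "a \<in> Phi" for a
    using that f g fcmb_apply cont_maps_closed Q.cmb_closed by simp
next
  fix X s assume X: "P.directed X" "P.is_sup X s"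
  have XP: "X \<subseteq> Phi" and sP: "s \<in> Phi"
    using X P.directed_subset P.is_sup_closed by auto
  have sf: "Q.is_sup (f ` X) (f s)" and sg: "Q.is_sup (g ` X) (g s)"
    using X f g cont_maps_is_sup_image by blast+
  have fg: "\<And>c. c \<in> Phi \<Longrightarrow> f c \<in> Psi \<and> g c \<in> Psi"
    using f g cont_maps_closed by blast
  show "Q.is_sup (fcmb f g ` X) (fcmb f g s)"
    unfolding ia_is_sup_def
  proof (intro conjI ballI impI)
    show "fcmb f g s \<in> Psi"
      using fg sP fcmb_apply Q.cmb_closed by simp
  next
    fix b assume "b \<in> fcmb f g ` X"
    then obtain c where c: "c \<in> X" "b = fcmb f g c" by blast
    have cP: "c \<in> Phi"
      using c XP by auto
    have "Q.le (f c) (f s)" "Q.le (g c) (g s)"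
      using c Q.is_sup_upper[OF sf] Q.is_sup_upper[OF sg] by simp_all
    then have "Q.le (cQ (f c) (g c)) (cQ (f s) (g s))"
      using fg[OF cP] fg[OF sP] Q.cmb_mono by blast
    then show "Q.le b (fcmb f g s)"
      using c(2) fcmb_apply[OF cP] fcmb_apply[OF sP] by simp
  next
    fix u assume u: "u \<in> Psi" "\<forall>b\<in>fcmb f g ` X. Q.le b u"
    have "Q.le (f c) u \<and> Q.le (g c) u" if c: "c \<in> X" for c
    proof -
      have cP: "c \<in> Phi" using c XP by auto
      have "Q.le (cQ (f c) (g c)) u"
        using u c cP fcmb_apply by (metis image_eqI)
      then show ?thesis
        using cP fg u Q.cmb_closed Q.le_cmb_left Q.le_cmb_right Q.le_trans by meson
    qed
    then have "Q.le (f s) u" "Q.le (g s) u"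
      using Q.is_sup_least[OF sf u(1)] Q.is_sup_least[OF sg u(1)] by blast+
    then show "Q.le (fcmb f g s) u"
      using fcmb_apply[OF sP] Q.cmb_le fg[OF sP] u(1) by metis
  qed
qed

lemma funit_closed: "funit \<in> Fn"
proof (rule cont_mapsI)
  show "funit \<in> extensional Phi"
    unfolding fun_unit_def by simp
  show "funit a \<in> Psi" if "a \<in> Phi" for a
    using that funit_apply Q.e_closed by simp
next
  fix X s assume X: "P.directed X" "P.is_sup X s"
  obtain c where c: "c \<in> X"
    using P.directed_nonempty[OF X(1)] by blast
  have "funit ` X = {eQ}"
    using c P.directed_subset[OF X(1)] funit_apply by (auto intro!: rev_image_eqI[of c])
  moreover have "funit s = eQ"
    using funit_apply[OF P.is_sup_closed[OF X(2)]] .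
  ultimately show "Q.is_sup (funit ` X) (funit s)"
    using Q.is_sup_singleton Q.e_closed by simp
qed

lemma ffoc_closed:
  assumes f: "f \<in> Fn"
  shows "ffoc f (x, y) \<in> Fn"
proof (rule cont_mapsI)
  show "ffoc f (x, y) \<in> extensional Phi"
    by (rule ffoc_extensional)
  show "ffoc f (x, y) a \<in> Psi" if "a \<in> Phi" for a
    using that f ffoc_apply cont_maps_closed Q.foc_closed P.foc_closed by simp
next
  fix X s assume X: "P.directed X" "P.is_sup X s"
  define Y where "Y = (\<lambda>c. fP c x) ` X"
  have Y: "P.directed Y" "P.is_sup Y (fP s x)"
    using P.foc_directed_image P.foc_is_sup_image X Y_def by auto
  have "Q.is_sup ((\<lambda>c. fQ c y) ` f ` Y) (fQ (f (fP s x)) y)"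
    using Q.foc_is_sup_image cont_maps_directed_image cont_maps_is_sup_image f Y by blast
  moreover have "(\<lambda>c. fQ c y) ` f ` Y = ffoc f (x, y) ` X"
    unfolding Y_def image_image
    by (rule image_cong) (use P.directed_subset[OF X(1)] in \<open>auto simp: ffoc_apply\<close>)
  moreover have "ffoc f (x, y) s = fQ (f (fP s x)) y"
    using ffoc_apply X P.is_sup_closed by auto
  ultimately show "Q.is_sup (ffoc f (x, y) ` X) (ffoc f (x, y) s)"
    by simp
qed

lemma info_alg_cont_maps: "info_alg Fn fcmb funit ffoc"
  unfolding info_alg_def
proof (intro conjI ballI allI)
  fix f g assume "f \<in> Fn" "g \<in> Fn"
  then show "fcmb f g \<in> Fn" by (rule fcmb_closed)
next
  show "funit \<in> Fn" by (rule funit_closed)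
next
  fix f xy assume "f \<in> Fn"
  then show "ffoc f xy \<in> Fn" using ffoc_closed by (cases xy) simp
next
  fix f g h assume "f \<in> Fn" "g \<in> Fn" "h \<in> Fn"
  then show "fcmb (fcmb f g) h = fcmb f (fcmb g h)"
    by (intro extensionalityI[OF fcmb_extensional fcmb_extensional])
      (simp add: fcmb_apply Q.cmb_assoc cont_maps_closed)
next
  fix f g assume "f \<in> Fn" "g \<in> Fn"
  then show "fcmb f g = fcmb g f"
    by (intro extensionalityI[OF fcmb_extensional fcmb_extensional])
      (simp add: fcmb_apply Q.cmb_commute cont_maps_closed)
next
  fix f assume "f \<in> Fn"
  then show "fcmb f funit = f"
    by (intro extensionalityI[OF fcmb_extensional cont_maps_extensional])
      (simp_all add: fcmb_apply funit_apply Q.cmb_e cont_maps_closed)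
next
  fix f x y assume "f \<in> Fn"
  then show "ffoc (ffoc f y) x = ffoc f (inf x y)"
    by (intro extensionalityI[OF ffoc_extensional ffoc_extensional])
      (simp add: ffoc_apply P.foc_closed P.foc_foc Q.foc_foc cont_maps_closed inf_commute)
next
  fix f g xy assume "f \<in> Fn" "g \<in> Fn"
  then show "ffoc (fcmb (ffoc f xy) g) xy = fcmb (ffoc f xy) (ffoc g xy)"
    by (intro extensionalityI[OF ffoc_extensional fcmb_extensional])
      (simp add: ffoc_apply fcmb_apply P.foc_closed P.foc_idem Q.foc_cmb_foc cont_maps_closed)
next
  fix f assume "f \<in> Fn"
  then have "ffoc f (P.dom_top, Q.dom_top) = f"
    by (intro extensionalityI[OF ffoc_extensional cont_maps_extensional])
      (simp_all add: ffoc_apply P.foc_dom_top Q.foc_dom_top cont_maps_closed)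
  then show "\<exists>xy. ffoc f xy = f" by blast
next
  fix f xy assume f: "f \<in> Fn"
  show "fcmb f (ffoc f xy) = f"
  proof (rule extensionalityI[OF fcmb_extensional cont_maps_extensional[OF f]])
    fix a assume a: "a \<in> Phi"
    have aa: "fP a (fst xy) \<in> Phi"
      using a P.foc_closed by auto
    have "Q.le (f (fP a (fst xy))) (f a)"
      using cont_maps_mono f aa a P.foc_le by blast
    then have "Q.le (fQ (f (fP a (fst xy))) (snd xy)) (f a)"
      using Q.foc_le Q.le_trans cont_maps_closed f aa a Q.foc_closed by blast
    then show "fcmb f (ffoc f xy) a = f a"
      using a aa f fcmb_apply ffoc_apply Q.cmb_absorb_le cont_maps_closed Q.foc_closed by simp
  qed
qed

sublocale F: info_algebra Fn fcmb funit ffoc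
  by (rule info_algebra.intro, rule info_alg_cont_maps)

lemma directed_pointwise:
  assumes G: "F.directed G" and a: "a \<in> Phi"
  shows "Q.directed ((\<lambda>h. h a) ` G)"
proof (rule ia_directed_image[OF G])
  show "(\<lambda>h. h a) ` G \<subseteq> Psi"
    using F.directed_subset[OF G] cont_maps_closed a by auto
  show "Q.le (g a) (h a)" if "g \<in> G" "h \<in> G" "F.le g h" for g h
    using that F.directed_subset[OF G] fun_le_iff a by blast
qed

definition pointwise_sup :: "('a \<Rightarrow> 'b) set \<Rightarrow> 'a \<Rightarrow> 'b" where
  "pointwise_sup G = (\<lambda>a\<in>Phi. SOME s. Q.is_sup ((\<lambda>h. h a) ` G) s)"

lemma pointwise_sup_apply:
  assumes "F.directed G" "a \<in> Phi"
  shows "Q.is_sup ((\<lambda>h. h a) ` G) (pointwise_sup G a)"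
proof -
  obtain s where "Q.is_sup ((\<lambda>h. h a) ` G) s"
    using Q.directed_has_sup directed_pointwise assms by blast
  then show ?thesis
    unfolding pointwise_sup_def using assms(2) by (simp add: someI)
qed

lemma pointwise_sup_closed:
  assumes G: "F.directed G"
  shows "pointwise_sup G \<in> Fn"
proof (rule cont_mapsI)
  have GF: "G \<subseteq> Fn"
    using G F.directed_subset by auto
  show "pointwise_sup G \<in> extensional Phi"
    unfolding pointwise_sup_def by simp
  show "pointwise_sup G a \<in> Psi" if "a \<in> Phi" for a
    using that pointwise_sup_apply G Q.is_sup_closed by blast
  fix X s assume X: "P.directed X" "P.is_sup X s"
  have XP: "X \<subseteq> Phi" and sP: "s \<in> Phi"
    using X P.directed_subset P.is_sup_closed by auto
  have sup_s: "Q.is_sup ((\<lambda>h. h s) ` G) (pointwise_sup G s)"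
    using pointwise_sup_apply G sP by blast
  have sup_c: "Q.is_sup ((\<lambda>h. h c) ` G) (pointwise_sup G c)" if "c \<in> X" for c
    using pointwise_sup_apply G XP that by blast
  show "Q.is_sup (pointwise_sup G ` X) (pointwise_sup G s)"
    unfolding ia_is_sup_def
  proof (intro conjI ballI impI)
    show "pointwise_sup G s \<in> Psi"
      using sup_s Q.is_sup_closed by blast
  next
    fix b assume "b \<in> pointwise_sup G ` X"
    then obtain c where c: "c \<in> X" "b = pointwise_sup G c" by blast
    have cP: "c \<in> Phi"
      using c XP by auto
    have "Q.le (h c) (pointwise_sup G s)" if h: "h \<in> G" for h
    proof -
      have hF: "h \<in> Fn"
        using h GF by auto
      have "Q.le (h c) (h s)"
        using cont_maps_mono[OF hF cP sP P.is_sup_upper[OF X(2) c(1)]] .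
      moreover have "Q.le (h s) (pointwise_sup G s)"
        using Q.is_sup_upper[OF sup_s] h by simp
      ultimately show ?thesis
        using Q.le_trans cont_maps_closed[OF hF] cP sP Q.is_sup_closed[OF sup_s] by blast
    qed
    then show "Q.le b (pointwise_sup G s)"
      using c Q.is_sup_least[OF sup_c Q.is_sup_closed[OF sup_s]] by blast
  next
    fix u assume u: "u \<in> Psi" "\<forall>b\<in>pointwise_sup G ` X. Q.le b u"
    have "Q.le (h s) u" if h: "h \<in> G" for h
    proof (rule Q.is_sup_least[OF cont_maps_is_sup_image[OF _ X] u(1)])
      show "h \<in> Fn" using h GF by auto
      fix b assume "b \<in> h ` X"
      then obtain c where c: "c \<in> X" "b = h c" by blast
      have "Q.le (h c) (pointwise_sup G c)"
        using Q.is_sup_upper[OF sup_c[OF c(1)]] h by simp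
      moreover have "Q.le (pointwise_sup G c) u"
        using u c by simp
      ultimately show "Q.le b u"
        using c h GF XP u(1) Q.le_trans cont_maps_closed Q.is_sup_closed[OF sup_c[OF c(1)]]
        by (metis subsetD)
    qed
    then show "Q.le (pointwise_sup G s) u"
      using Q.is_sup_least[OF sup_s u(1)] by blast
  qed
qed

lemma is_sup_pointwise_sup:
  assumes G: "F.directed G"
  shows "F.is_sup G (pointwise_sup G)"
  unfolding ia_is_sup_def
proof (intro conjI ballI impI)
  have GF: "G \<subseteq> Fn"
    using G F.directed_subset by auto
  show C: "pointwise_sup G \<in> Fn"
    using pointwise_sup_closed G .
  show "F.le h (pointwise_sup G)" if "h \<in> G" for h
    using that GF C fun_le_iff pointwise_sup_apply[OF G] Q.is_sup_upper by blast
  fix u assume u: "u \<in> Fn" "\<forall>h\<in>G. F.le h u"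
  have "Q.le (pointwise_sup G a) (u a)" if a: "a \<in> Phi" for a
  proof (rule Q.is_sup_least[OF pointwise_sup_apply[OF G a] cont_maps_closed[OF u(1) a]])
    fix b assume "b \<in> (\<lambda>h. h a) ` G"
    then obtain h where "h \<in> G" "b = h a" by blast
    then show "Q.le b (u a)"
      using u GF fun_le_iff a by blast
  qed
  then show "F.le (pointwise_sup G) u"
    using fun_le_iff[OF C u(1)] by blast
qed

lemma is_sup_pointwise:
  assumes "F.directed G" "F.is_sup G g" "a \<in> Phi"
  shows "Q.is_sup ((\<lambda>h. h a) ` G) (g a)"
  using F.is_sup_unique[OF assms(2) is_sup_pointwise_sup] pointwise_sup_apply assms by simp

definition step_fun :: "'a \<Rightarrow> 'b \<Rightarrow> 'd \<Rightarrow> 'a \<Rightarrow> 'b" where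
  "step_fun a b x = (\<lambda>p\<in>Phi. if P.way_below a (fP p x) then b else eQ)"

lemma step_fun_closed:
  assumes a: "a \<in> Phi" and b: "b \<in> Psi"
  shows "step_fun a b x \<in> Fn"
proof (rule cont_mapsI)
  show "step_fun a b x \<in> extensional Phi"
    unfolding step_fun_def by simp
  show "step_fun a b x p \<in> Psi" if "p \<in> Phi" for p
    using that b Q.e_closed unfolding step_fun_def by simp
next
  fix X s assume X: "P.directed X" "P.is_sup X s"
  have XP: "X \<subseteq> Phi" and sP: "s \<in> Phi"
    using X P.directed_subset P.is_sup_closed by auto
  have below_s: "P.way_below a (fP s x)" if "c \<in> X" "P.way_below a (fP c x)" for c
  proof -
    have "P.le (fP c x) (fP s x)"
      using that XP sP P.foc_mono P.is_sup_upper[OF X(2)] by blast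
    then show ?thesis
      using P.way_below_mono[OF a a] that XP sP P.foc_closed P.le_refl[OF a] by blast
  qed
  show "Q.is_sup (step_fun a b x ` X) (step_fun a b x s)"
  proof (cases "P.way_below a (fP s x)")
    case True
    txt \<open>The x-focus of s is the directed supremum of the x-foci of X, so interpolation
      puts a way below the x-focus of some member of X.\<close>
    then obtain a' where a': "a' \<in> P.basis" "P.way_below a a'" "P.way_below a' (fP s x)"
      using P.way_below_interpolate a sP P.foc_closed by blast
    obtain c where c: "c \<in> X" "P.le a' (fP c x)"
      using a'(3) P.foc_directed_image[OF X(1)] P.foc_is_sup_image[OF X] P.le_refl P.foc_closed sP
      unfolding ia_way_below_def by blast
    have "P.way_below a (fP c x)"
      using P.way_below_mono[OF a a] a' c P.basis_subset P.foc_closed XP P.le_refl[OF a] by blast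
    then have "step_fun a b x c = b"
      using c XP unfolding step_fun_def by auto
    moreover have "step_fun a b x s = b"
      using True sP unfolding step_fun_def by simp
    moreover have "Q.le d b" if "d \<in> step_fun a b x ` X" for d
      using that XP b Q.le_refl Q.e_le unfolding step_fun_def by auto
    ultimately show ?thesis
      using c b by (metis Q.is_sup_greatest_element image_eqI)
  next
    case False
    obtain c where c: "c \<in> X"
      using P.directed_nonempty[OF X(1)] by blast
    have "step_fun a b x ` X = {eQ}"
      using False below_s c XP unfolding step_fun_def by (auto intro!: rev_image_eqI[of c])
    moreover have "step_fun a b x s = eQ"
      using False sP unfolding step_fun_def by simp
    ultimately show ?thesis
      using Q.is_sup_singleton Q.e_closed by simp
  qed
qed

lemma ffoc_step_fun:
  assumes "b \<in> Psi" "fQ b y = b"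
  shows "ffoc (step_fun a b x) (x, y) = step_fun a b x"
  using assms P.foc_closed P.foc_idem Q.foc_e
  by (intro extensionalityI[OF ffoc_extensional]) (simp_all add: ffoc_apply step_fun_def)

lemma step_fun_way_below:
  assumes a: "a \<in> Phi" and b: "b \<in> Psi" and f: "f \<in> Fn" and w: "Q.way_below b (f a)"
  shows "F.way_below (step_fun a b x) f"
  unfolding ia_way_below_def
proof (intro allI impI)
  fix G g assume G: "F.directed G" "F.is_sup G g" "F.le f g"
  have GF: "G \<subseteq> Fn" and gF: "g \<in> Fn"
    using G F.directed_subset F.is_sup_closed by auto
  have "Q.le (f a) (g a)"
    using G fun_le_iff f gF a by blast
  then obtain h where h: "h \<in> G" "Q.le b (h a)"
    using w directed_pointwise[OF G(1) a] is_sup_pointwise[OF G(1,2) a]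
    unfolding ia_way_below_def by blast
  have hF: "h \<in> Fn"
    using h GF by auto
  have "Q.le (step_fun a b x p) (h p)" if p: "p \<in> Phi" for p
  proof (cases "P.way_below a (fP p x)")
    case True
    then have "P.le a p"
      using P.way_below_le P.le_trans P.foc_le P.foc_closed p a by blast
    then have "Q.le b (h p)"
      using h cont_maps_mono[OF hF a p] Q.le_trans b cont_maps_closed hF a p by blast
    then show ?thesis
      using True p unfolding step_fun_def by simp
  next
    case False
    then show ?thesis
      using p Q.e_le cont_maps_closed hF unfolding step_fun_def by simp
  qed
  then have "F.le (step_fun a b x) h"
    using fun_le_iff[OF step_fun_closed[OF a b] hF] by blast
  then show "\<exists>c\<in>G. F.le (step_fun a b x) c"
    using h by blast
qed

lemma step_fun_approximant:
  assumes f: "f \<in> Fn" and p: "p \<in> Phi" and b: "b \<in> Psi" "Q.way_below b (f (fP p x))"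
  obtains a where "a \<in> Phi" "F.way_below (step_fun a b x) f" "step_fun a b x p = b"
proof -
  have wP: "f (fP p x) \<in> Psi"
    using p P.foc_closed cont_maps_closed f by auto
  obtain b' where b': "b' \<in> Q.basis" "Q.way_below b b'" "Q.way_below b' (f (fP p x))"
    using Q.way_below_interpolate[OF b(1) wP b(2)] by blast
  have b'P: "b' \<in> Psi"
    using b' Q.basis_subset by auto
  define S where "S = {a \<in> P.basis. fP a x = a \<and> P.way_below a (fP p x)}"
  have S: "P.directed S" "P.is_sup S (fP p x)"
    unfolding S_def using P.focused_basis_directed P.foc_is_sup_focused_basis[OF p] by auto
  obtain a where a: "a \<in> S" "Q.le b' (f a)"
    using b'(3) cont_maps_directed_image[OF f S(1)] cont_maps_is_sup_image[OF f S] Q.le_refl[OF wP]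
    unfolding ia_way_below_def by blast
  have aP: "a \<in> Phi"
    using a P.basis_subset S_def by auto
  have "Q.way_below b (f a)"
    using Q.way_below_mono[OF b(1) b(1) b'P cont_maps_closed[OF f aP] Q.le_refl[OF b(1)] b'(2) a(2)] .
  moreover have "step_fun a b x p = b"
    using a p unfolding S_def step_fun_def by simp
  ultimately show thesis
    using that aP step_fun_way_below[OF aP b(1) f] by blast
qed

lemma ffoc_is_sup_approximants:
  assumes f: "f \<in> Fn"
  shows "F.is_sup {g \<in> Fn. ffoc g (x, y) = g \<and> F.way_below g f} (ffoc f (x, y))"
  unfolding ia_is_sup_def
proof (intro conjI ballI impI)
  show fxy: "ffoc f (x, y) \<in> Fn"
    using ffoc_closed f by blast
  show "F.le g (ffoc f (x, y))" if "g \<in> {g \<in> Fn. ffoc g (x, y) = g \<and> F.way_below g f}" for g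
    using that F.way_below_le[of g f] F.foc_mono[of g f "(x, y)"] f by auto
  fix u assume u: "u \<in> Fn" "\<forall>g\<in>{g \<in> Fn. ffoc g (x, y) = g \<and> F.way_below g f}. F.le g u"
  have "Q.le (fQ (f (fP p x)) y) (u p)" if p: "p \<in> Phi" for p
  proof (rule Q.is_sup_least[OF Q.foc_is_sup_basis cont_maps_closed[OF u(1) p]])
    show "f (fP p x) \<in> Psi"
      using f p P.foc_closed cont_maps_closed by blast
    fix b assume b: "b \<in> {psi \<in> Q.basis. fQ psi y = psi \<and> Q.way_below psi (f (fP p x))}"
    then have bP: "b \<in> Psi"
      using Q.basis_subset by auto
    obtain a where a: "a \<in> Phi" "F.way_below (step_fun a b x) f" "step_fun a b x p = b"
      using step_fun_approximant[OF f p bP] b by blast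
    then have "F.le (step_fun a b x) u"
      using u(2) b bP step_fun_closed ffoc_step_fun by blast
    then have "Q.le (step_fun a b x p) (u p)"
      using fun_le_iff[OF step_fun_closed[OF a(1) bP] u(1)] p by blast
    then show "Q.le b (u p)"
      using a(3) by simp
  qed
  then show "F.le (ffoc f (x, y)) u"
    using fun_le_iff[OF fxy u(1)] ffoc_apply by simp
qed

lemma s_continuous_cont_maps: "s_continuous Fn fcmb funit ffoc"
  unfolding s_continuous_def
proof (intro conjI exI[of _ Fn] ballI allI impI subset_refl funit_closed fcmb_closed)
  have "xy \<le> (P.dom_top, Q.dom_top)" for xy :: "'d \<times> 'e"
    using P.le_dom_top Q.le_dom_top by (cases xy) simp
  then show "\<exists>t :: 'd \<times> 'e. \<forall>xy. xy \<le> t"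
    by blast
  show "\<exists>s. F.is_sup G s" if "G \<subseteq> Fn" "F.directed G" for G
    using that is_sup_pointwise_sup by blast
  show "F.is_sup {psi \<in> Fn. ffoc psi xy = psi \<and> F.way_below psi f} (ffoc f xy)"
    if "f \<in> Fn" for f and xy :: "'d \<times> 'e"
    using that ffoc_is_sup_approximants by (cases xy) simp
qed

end

theorem theorem3p14:
  fixes Phi :: "'a set" and cP :: "'a \<Rightarrow> 'a \<Rightarrow> 'a" and eP :: 'a
    and fP :: "'a \<Rightarrow> 'd::lattice \<Rightarrow> 'a"
    and Psi :: "'b set" and cQ :: "'b \<Rightarrow> 'b \<Rightarrow> 'b" and eQ :: 'b
    and fQ :: "'b \<Rightarrow> 'e::lattice \<Rightarrow> 'b"
  assumes "info_alg Phi cP eP fP" and "s_continuous Phi cP eP fP"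
    and "info_alg Psi cQ eQ fQ" and "s_continuous Psi cQ eQ fQ"
  shows "info_alg (cont_maps Phi cP Psi cQ) (fun_comb Phi cQ) (fun_unit Phi eQ)
           (fun_focus Phi fP fQ)
       \<and> s_continuous (cont_maps Phi cP Psi cQ) (fun_comb Phi cQ) (fun_unit Phi eQ)
           (fun_focus Phi fP fQ)"
proof -
  interpret cont_function_space Phi cP eP fP Psi cQ eQ fQ
    using assms by (simp add: cont_function_space_def s_cont_info_algebra_def
        s_cont_info_algebra_axioms_def info_algebra_def)
  show ?thesis
    using info_alg_cont_maps s_continuous_cont_maps by blast
qed

end
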